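(* Let $H(\cdot)=H(\cdot;b_r)$ be as in the context, with $b=b_r\vee b^{**}$. Then: (I) $H'(x)>0$ for all $x\ge0$. (II) $H(0)\ge0$ if and only if $r_1e^{r_1b}-r_2e^{r_2b}\le\frac{r_1-r_2}{k}$; and $H(0)\le0$ if and only if $r_1e^{r_1b}-r_2e^{r_2b}\ge\frac{r_1-r_2}{k}$. (III) Condition (K) is equivalent to $b^{**}\le b^*$, which is equivalent to $r_1e^{r_1b^{**}}-r_2e^{r_2b^{**}}\le\frac{r_1-r_2}{k}$. Likewise, (K) with reversed inequality is equivalent to $b^{**}\ge b^*$, which is equivalent to $r_1e^{r_1b^{**}}-r_2e^{r_2b^{**}}\ge\frac{r_1-r_2}{k}$. (IV) If $b_r\le b^{**}$, then $H(0)\ge0$ is equivalent to (K), and $H(0)\le0$ is equivalent to (K) with reversed inequality. (V) If (K) holds with reversed inequality, then $H(0;b_r)\le0$ for every $b_r\ge0$. (VI) If (K) holds, then the equation $r_1e^{r_1\hat b}-r_2e^{r_2\hat b}=\frac{r_1-r_2}{k}$ has a unique solution $\hat b$ in $[b^{**},\infty)$, and $H(0;b_r)\ge0$ if and only if $b_r\le\hat b$.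
   Context: Fix parameters $\mu>0$, $\sigma>0$, $\alpha>0$ and $k>1$. Set $r_1:=-\frac{\mu}{\sigma^2}+\sqrt{\frac{\mu^2}{\sigma^4}+\frac{2\alpha}{\sigma^2}}$ and $r_2:=-\frac{\mu}{\sigma^2}-\sqrt{\frac{\mu^2}{\sigma^4}+\frac{2\alpha}{\sigma^2}}$ (so $r_2<0<r_1$ and $r_2^2>r_1^2$). Let $b^*:=\frac{\log(r_2^2/r_1^2)}{r_1-r_2}>0$ and let $b^{**}>0$ be the unique positive solution of $r_1e^{-r_2b}-r_2e^{-r_1b}=k(r_1-r_2)$. For a dividend payout barrier $b_r\ge0$ put $b=b_r\vee b^{**}$ and define $H(x;b_r):=\frac{1}{e^{r_1b}-e^{r_2b}}\Big(\frac{1-ke^{r_2b}}{r_1}e^{r_1x}-\frac{1-ke^{r_1b}}{r_2}e^{r_2x}\Big)$ for $0\le x\le b$ and $H(x;b_r):=x-b+\frac{1}{e^{r_1b}-e^{r_2b}}\Big(\frac{1-ke^{r_2b}}{r_1}e^{r_1b}-\frac{1-ke^{r_1b}}{r_2}e^{r_2b}\Big)$ for $x>b$. Condition (K) is the inequality $k\le\dfrac{r_1-r_2}{r_1\left(\frac{r_2^2}{r_1^2}\right)^{\frac{r_1}{r_1-r_2}}-r_2\left(\frac{r_2^2}{r_1^2}\right)^{\frac{r_2}{r_1-r_2}}}$. *)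

theory Defs
  imports "HOL-Analysis.Analysis"
begin

definition r1 :: "real \<Rightarrow> real \<Rightarrow> real \<Rightarrow> real" where
  "r1 \<mu> \<sigma> \<alpha> = - \<mu> / \<sigma>\<^sup>2 + sqrt (\<mu>\<^sup>2 / \<sigma>^4 + 2 * \<alpha> / \<sigma>\<^sup>2)"

definition r2 :: "real \<Rightarrow> real \<Rightarrow> real \<Rightarrow> real" where
  "r2 \<mu> \<sigma> \<alpha> = - \<mu> / \<sigma>\<^sup>2 - sqrt (\<mu>\<^sup>2 / \<sigma>^4 + 2 * \<alpha> / \<sigma>\<^sup>2)"

definition bstar :: "real \<Rightarrow> real \<Rightarrow> real \<Rightarrow> real" where
  "bstar \<mu> \<sigma> \<alpha> =
     ln ((r2 \<mu> \<sigma> \<alpha>)\<^sup>2 / (r1 \<mu> \<sigma> \<alpha>)\<^sup>2) / (r1 \<mu> \<sigma> \<alpha> - r2 \<mu> \<sigma> \<alpha>)"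

definition bss :: "real \<Rightarrow> real \<Rightarrow> real \<Rightarrow> real \<Rightarrow> real" where
  "bss \<mu> \<sigma> \<alpha> k = (THE b. b > 0 \<and>
     r1 \<mu> \<sigma> \<alpha> * exp (- r2 \<mu> \<sigma> \<alpha> * b) - r2 \<mu> \<sigma> \<alpha> * exp (- r1 \<mu> \<sigma> \<alpha> * b)
       = k * (r1 \<mu> \<sigma> \<alpha> - r2 \<mu> \<sigma> \<alpha>))"

definition bbar :: "real \<Rightarrow> real \<Rightarrow> real \<Rightarrow> real \<Rightarrow> real \<Rightarrow> real" where
  "bbar \<mu> \<sigma> \<alpha> k br = max br (bss \<mu> \<sigma> \<alpha> k)"

text \<open>The function H(x; b_r). The first branch is used for all x \<le> b (the paper only
  considers x \<ge> 0).\<close>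
definition H :: "real \<Rightarrow> real \<Rightarrow> real \<Rightarrow> real \<Rightarrow> real \<Rightarrow> real \<Rightarrow> real" where
  "H \<mu> \<sigma> \<alpha> k br x =
    (let p = r1 \<mu> \<sigma> \<alpha>; q = r2 \<mu> \<sigma> \<alpha>; b = bbar \<mu> \<sigma> \<alpha> k br;
         g = (\<lambda>y. ((1 - k * exp (q * b)) / p * exp (p * y) - (1 - k * exp (p * b)) / q * exp (q * y))
                   / (exp (p * b) - exp (q * b)))
     in if x \<le> b then g x else x - b + g b)"

definition Kbound :: "real \<Rightarrow> real \<Rightarrow> real \<Rightarrow> real" where
  "Kbound \<mu> \<sigma> \<alpha> =
    (let p = r1 \<mu> \<sigma> \<alpha>; q = r2 \<mu> \<sigma> \<alpha>
     in (p - q) / (p * (q\<^sup>2 / p\<^sup>2) powr (p / (p - q)) - q * (q\<^sup>2 / p\<^sup>2) powr (q / (p - q))))"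

definition condK :: "real \<Rightarrow> real \<Rightarrow> real \<Rightarrow> real \<Rightarrow> bool" where
  "condK \<mu> \<sigma> \<alpha> k \<longleftrightarrow> k \<le> Kbound \<mu> \<sigma> \<alpha>"

definition condK_rev :: "real \<Rightarrow> real \<Rightarrow> real \<Rightarrow> real \<Rightarrow> bool" where
  "condK_rev \<mu> \<sigma> \<alpha> k \<longleftrightarrow> k \<ge> Kbound \<mu> \<sigma> \<alpha>"

definition G :: "real \<Rightarrow> real \<Rightarrow> real \<Rightarrow> real \<Rightarrow> real" where
  "G \<mu> \<sigma> \<alpha> y = r1 \<mu> \<sigma> \<alpha> * exp (r1 \<mu> \<sigma> \<alpha> * y) - r2 \<mu> \<sigma> \<alpha> * exp (r2 \<mu> \<sigma> \<alpha> * y)"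

end

theory Submission
  imports Defs
begin

text \<open>Write p = r1, q = r2, f y = p exp(-q y) - q exp(-p y), so that f b** = k (p - q), and
  g y = p exp(p y) - q exp(q y), which is G. The identity
    g y f y - (p - q)^2 = p^2 (1 - exp(-(p - q) y)) (exp((p - q) y) - exp((p - q) b*))
  shows that for y > 0 the product g f stays below (p - q)^2 exactly when y \<le> b*. At y = b** this
  compares G(b**) with (p - q)/k. At y = b* it gives (p - q)/G(b*) = f(b*)/(p - q), which is the
  bound in (K); hence (K) reads f(b**) \<le> f(b*), i.e. b** \<le> b*, because f increases on [0, \<infinity>).
  The derivative of g is p^2 exp(q y) (exp((p - q) y) - exp((p - q) b*)), so g decreases up to b* and
  then increases without bound; this gives (V) and the unique crossing of (VI). Finally
  H(0) = ((p - q) - k G(b)) / (-p q (exp(p b) - exp(q b))) gives (II), and the two branches of H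
  join with slope 1 at b, the exponential branch having positive slope below b.\<close>

locale root_pair =
  fixes p q :: real
  assumes p_pos: "0 < p" and q_neg: "q < 0" and sum_neg: "p + q < 0"
begin

definition f :: "real \<Rightarrow> real" where
  "f y = p * exp (- q * y) - q * exp (- p * y)"

definition g :: "real \<Rightarrow> real" where
  "g y = p * exp (p * y) - q * exp (q * y)"

definition b_star :: real where
  "b_star = ln (q\<^sup>2 / p\<^sup>2) / (p - q)"

lemma diff_pos: "0 < p - q"
  using p_pos q_neg by linarith

lemma b_star_pos: "0 < b_star"
proof -
  have "p\<^sup>2 < (- q)\<^sup>2"
    using p_pos sum_neg by (intro power_strict_mono) auto
  hence "1 < q\<^sup>2 / p\<^sup>2"
    using p_pos by simp
  thus ?thesis
    unfolding b_star_def using diff_pos by simp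
qed

lemma exp_b_star: "exp ((p - q) * b_star) = q\<^sup>2 / p\<^sup>2"
  unfolding b_star_def using diff_pos p_pos q_neg by simp

lemma f_0: "f 0 = p - q"
  unfolding f_def by simp

lemma f_pos: "0 < f y" and g_pos: "0 < g y"
  unfolding f_def g_def using p_pos q_neg
  by (smt (verit) exp_gt_zero mult_neg_pos mult_pos_pos)+

lemma continuous_on_f: "continuous_on S f"
  and continuous_on_g: "continuous_on S g"
  unfolding f_def g_def by (intro continuous_intros)+

lemma f_strict_mono:
  assumes "0 \<le> x" "x < y"
  shows "f x < f y"
proof (rule DERIV_pos_imp_increasing_open[OF \<open>x < y\<close> _ continuous_on_f])
  fix t assume "x < t" "t < y"
  hence "exp (- p * t) < exp (- q * t)"
    using assms p_pos q_neg by (simp add: mult_strict_right_mono)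
  hence "0 < p * q * (exp (- p * t) - exp (- q * t))"
    using p_pos q_neg by (intro mult_neg_neg mult_pos_neg) auto
  moreover have "(f has_real_derivative p * q * (exp (- p * t) - exp (- q * t))) (at t)"
    unfolding f_def by (rule derivative_eq_intros refl | simp)+ (simp add: algebra_simps)
  ultimately show "\<exists>d. (f has_real_derivative d) (at t) \<and> 0 < d"
    by blast
qed

lemma f_le_iff: "0 \<le> x \<Longrightarrow> 0 \<le> y \<Longrightarrow> f x \<le> f y \<longleftrightarrow> x \<le> y"
  using f_strict_mono[of x y] f_strict_mono[of y x] by (cases x y rule: linorder_cases) auto

lemma ex1_f_eq:
  assumes "p - q < c"
  shows "\<exists>!b. 0 < b \<and> f b = c"
proof -
  define Y where "Y = c / (- p * q)"
  have "0 < - p * q"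
    using p_pos q_neg by (simp add: mult_pos_neg)
  hence "0 < Y"
    unfolding Y_def using assms diff_pos by (intro divide_pos_pos) auto
  have "p * (1 - q * Y) \<le> p * exp (- q * Y)"
    using exp_ge_add_one_self[of "- q * Y"] p_pos by simp
  moreover have "p * (1 - q * Y) = p + c"
    unfolding Y_def using p_pos q_neg by (simp add: field_simps)
  moreover have "0 < - q * exp (- p * Y)"
    using q_neg by (simp add: mult_neg_pos)
  ultimately have "c \<le> f Y"
    unfolding f_def using p_pos by linarith
  then obtain b where b: "0 \<le> b" "b \<le> Y" "f b = c"
    using IVT'[of f 0 c Y] f_0 assms \<open>0 < Y\<close> continuous_on_f by force
  with f_0 assms have "0 < b"
    by (cases "b = 0") auto
  moreover have "b' = b" if "0 < b'" "f b' = c" for b'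
    using f_le_iff[of b b'] f_le_iff[of b' b] that b by auto
  ultimately show ?thesis
    using b by blast
qed

lemma g_f_minus_square:
  "g y * f y - (p - q)\<^sup>2
     = p\<^sup>2 * (1 - exp (- (p - q) * y)) * (exp ((p - q) * y) - exp ((p - q) * b_star))"
proof -
  have "exp ((p - q) * y) * exp (- (p - q) * y) = 1"
    by (simp flip: exp_add add: algebra_simps)
  moreover have "exp (p * y) * exp (- q * y) = exp ((p - q) * y)"
    "exp (q * y) * exp (- p * y) = exp (- (p - q) * y)"
    "exp (p * y) * exp (- p * y) = 1" "exp (q * y) * exp (- q * y) = 1"
    by (simp_all flip: exp_add add: algebra_simps)
  ultimately show ?thesis
    unfolding g_def f_def exp_b_star using p_pos
    by (simp add: field_simps power2_eq_square)
qed

lemma g_f_b_star: "g b_star * f b_star = (p - q)\<^sup>2"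
  using g_f_minus_square[of b_star] by simp

lemma g_f_le_iff: "0 < y \<Longrightarrow> g y * f y \<le> (p - q)\<^sup>2 \<longleftrightarrow> y \<le> b_star"
  and g_f_ge_iff: "0 < y \<Longrightarrow> (p - q)\<^sup>2 \<le> g y * f y \<longleftrightarrow> b_star \<le> y"
proof -
  assume "0 < y"
  define c where "c = p\<^sup>2 * (1 - exp (- (p - q) * y))"
  have "exp (- (p - q) * y) < 1"
    using \<open>0 < y\<close> diff_pos by (simp add: mult_neg_pos)
  hence "0 < c"
    unfolding c_def using p_pos by simp
  moreover have "g y * f y - (p - q)\<^sup>2 = c * (exp ((p - q) * y) - exp ((p - q) * b_star))"
    unfolding c_def g_f_minus_square ..
  moreover have "exp ((p - q) * y) \<le> exp ((p - q) * b_star) \<longleftrightarrow> y \<le> b_star"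
    "exp ((p - q) * b_star) \<le> exp ((p - q) * y) \<longleftrightarrow> b_star \<le> y"
    using diff_pos by simp_all
  ultimately show "g y * f y \<le> (p - q)\<^sup>2 \<longleftrightarrow> y \<le> b_star"
    "(p - q)\<^sup>2 \<le> g y * f y \<longleftrightarrow> b_star \<le> y"
    by (smt (verit) mult_le_0_iff zero_le_mult_iff)+
qed

lemma g_derivative_factor:
  "p\<^sup>2 * exp (p * t) - q\<^sup>2 * exp (q * t)
     = p\<^sup>2 * exp (q * t) * (exp ((p - q) * t) - exp ((p - q) * b_star))"
  unfolding exp_b_star using p_pos
  by (simp add: field_simps left_diff_distrib exp_diff)

lemma has_real_derivative_g: "(g has_real_derivative p\<^sup>2 * exp (p * t) - q\<^sup>2 * exp (q * t)) (at t)"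
  unfolding g_def
  by (rule derivative_eq_intros refl | simp)+ (simp add: algebra_simps power2_eq_square)

lemma g_strict_antimono:
  assumes "x < y" "y \<le> b_star"
  shows "g y < g x"
proof (rule DERIV_neg_imp_decreasing_open[OF \<open>x < y\<close> _ continuous_on_g])
  fix t assume "x < t" "t < y"
  hence "exp ((p - q) * t) < exp ((p - q) * b_star)"
    using assms diff_pos by simp
  hence "p\<^sup>2 * exp (p * t) - q\<^sup>2 * exp (q * t) < 0"
    unfolding g_derivative_factor using p_pos by (simp add: mult_pos_neg)
  thus "\<exists>d. (g has_real_derivative d) (at t) \<and> d < 0"
    using has_real_derivative_g by blast
qed

lemma g_strict_mono:
  assumes "b_star \<le> x" "x < y"
  shows "g x < g y"
proof (rule DERIV_pos_imp_increasing_open[OF \<open>x < y\<close> _ continuous_on_g])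
  fix t assume "x < t" "t < y"
  hence "exp ((p - q) * b_star) < exp ((p - q) * t)"
    using assms diff_pos by simp
  hence "0 < p\<^sup>2 * exp (p * t) - q\<^sup>2 * exp (q * t)"
    unfolding g_derivative_factor using p_pos by simp
  thus "\<exists>d. (g has_real_derivative d) (at t) \<and> 0 < d"
    using has_real_derivative_g by blast
qed

lemma g_unbounded: "\<exists>y\<ge>a. c \<le> g y"
proof -
  define y where "y = max a (\<bar>c\<bar> / p\<^sup>2)"
  have "\<bar>c\<bar> / p\<^sup>2 \<le> y"
    unfolding y_def by simp
  hence "\<bar>c\<bar> \<le> p\<^sup>2 * y"
    using p_pos by (simp add: field_simps)
  moreover have "p * (1 + p * y) \<le> p * exp (p * y)"
    using exp_ge_add_one_self[of "p * y"] p_pos by simp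
  moreover have "0 < - q * exp (q * y)"
    using q_neg by (simp add: mult_neg_pos)
  ultimately have "c \<le> g y"
    unfolding g_def using p_pos by (simp add: algebra_simps power2_eq_square)
  moreover have "a \<le> y"
    unfolding y_def by simp
  ultimately show ?thesis
    by blast
qed

end

locale threshold_crossing = root_pair +
  fixes k b0 :: real
  assumes k_gt_1: "1 < k" and b0_pos: "0 < b0" and f_b0: "f b0 = k * (p - q)"
begin

lemma level_times_f_b0: "(p - q) / k * f b0 = (p - q)\<^sup>2"
  using k_gt_1 by (simp add: f_b0 power2_eq_square)

lemma b0_le_b_star_iff: "b0 \<le> b_star \<longleftrightarrow> g b0 \<le> (p - q) / k"
proof -
  have "g b0 \<le> (p - q) / k \<longleftrightarrow> g b0 * f b0 \<le> (p - q) / k * f b0"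
    by (rule mult_le_cancel_right_pos[OF f_pos, symmetric])
  thus ?thesis
    using g_f_le_iff[OF b0_pos] level_times_f_b0 by simp
qed

lemma b_star_le_b0_iff: "b_star \<le> b0 \<longleftrightarrow> (p - q) / k \<le> g b0"
proof -
  have "(p - q) / k \<le> g b0 \<longleftrightarrow> (p - q) / k * f b0 \<le> g b0 * f b0"
    by (rule mult_le_cancel_right_pos[OF f_pos, symmetric])
  thus ?thesis
    using g_f_ge_iff[OF b0_pos] level_times_f_b0 by simp
qed

lemma level_b_star: "(p - q) / g b_star = f b_star / (p - q)"
  using g_f_b_star g_pos[of b_star] diff_pos by (simp add: field_simps power2_eq_square)

lemma k_le_iff: "k \<le> (p - q) / g b_star \<longleftrightarrow> b0 \<le> b_star"
  using f_le_iff[of b0 b_star] b0_pos b_star_pos diff_pos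
  by (simp add: level_b_star le_divide_eq f_b0)

lemma k_ge_iff: "(p - q) / g b_star \<le> k \<longleftrightarrow> b_star \<le> b0"
  using f_le_iff[of b_star b0] b0_pos b_star_pos diff_pos
  by (simp add: level_b_star divide_le_eq f_b0)

lemma g_ge_level: "b_star \<le> b0 \<Longrightarrow> b0 \<le> m \<Longrightarrow> (p - q) / k \<le> g m"
  using g_strict_mono[of b0 m] b_star_le_b0_iff by (cases "b0 = m") auto

context
  assumes b0_le: "b0 \<le> b_star"
begin

lemma g_le_level: "b0 \<le> m \<Longrightarrow> m \<le> b_star \<Longrightarrow> g m \<le> (p - q) / k"
  using g_strict_antimono[of b0 m] b0_le_b_star_iff b0_le by (cases "b0 = m") auto

lemma solution_ge_b_star:
  assumes "b0 \<le> bh" "g bh = (p - q) / k"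
  shows "b_star \<le> bh"
proof (rule ccontr)
  assume "\<not> b_star \<le> bh"
  show False
  proof (cases "b0 = bh")
    case True
    thus False using assms b_star_le_b0_iff \<open>\<not> b_star \<le> bh\<close> by simp
  next
    case False
    hence "g bh < g b0"
      using g_strict_antimono[of b0 bh] assms \<open>\<not> b_star \<le> bh\<close> by simp
    thus False using assms b0_le b0_le_b_star_iff by simp
  qed
qed

lemma g_le_level_iff:
  assumes "b0 \<le> bh" "g bh = (p - q) / k" "b0 \<le> m"
  shows "g m \<le> (p - q) / k \<longleftrightarrow> m \<le> bh"
proof -
  have "b_star \<le> bh"
    using solution_ge_b_star assms by blast
  show ?thesis
  proof (cases "m \<le> b_star")
    case True
    thus ?thesis using g_le_level assms \<open>b_star \<le> bh\<close> by auto
  next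
    case False
    thus ?thesis
      using g_strict_mono[of m bh] g_strict_mono[of bh m] assms \<open>b_star \<le> bh\<close>
      by (cases m bh rule: linorder_cases) auto
  qed
qed

lemma ex1_solution: "\<exists>!bh. b0 \<le> bh \<and> g bh = (p - q) / k"
proof -
  obtain y where "b_star \<le> y" "(p - q) / k \<le> g y"
    using g_unbounded by blast
  moreover have "g b_star \<le> (p - q) / k"
    using g_le_level b0_le by simp
  ultimately obtain bh where "b_star \<le> bh" "g bh = (p - q) / k"
    using IVT'[of g b_star "(p - q) / k" y] continuous_on_g by auto
  hence "b0 \<le> bh \<and> g bh = (p - q) / k"
    using b0_le by simp
  moreover have "x = bh" if "b0 \<le> x" "g x = (p - q) / k" for x
    using g_le_level_iff[of bh x] g_le_level_iff[of x bh] that \<open>b0 \<le> bh \<and> _\<close> by auto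
  ultimately show ?thesis
    by blast
qed

end

end

locale barrier = root_pair +
  fixes k b :: real
  assumes k_gt_1: "1 < k" and b_pos: "0 < b"
begin

definition h_exp :: "real \<Rightarrow> real" where
  "h_exp y = ((1 - k * exp (q * b)) / p * exp (p * y) - (1 - k * exp (p * b)) / q * exp (q * y))
               / (exp (p * b) - exp (q * b))"

definition h :: "real \<Rightarrow> real" where
  "h x = (if x \<le> b then h_exp x else x - b + h_exp b)"

definition h_slope :: "real \<Rightarrow> real" where
  "h_slope y = ((1 - k * exp (q * b)) * exp (p * y) - (1 - k * exp (p * b)) * exp (q * y))
               / (exp (p * b) - exp (q * b))"

lemma denom_pos: "0 < exp (p * b) - exp (q * b)"
  using p_pos q_neg b_pos by (simp add: mult_strict_right_mono)

lemma denom_nonzero: "exp (p * b) - exp (q * b) \<noteq> 0"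
  using denom_pos by linarith

lemma h_exp_0: "h_exp 0 = ((p - q) - k * g b) / (- p * q * (exp (p * b) - exp (q * b)))"
proof -
  have "(1 - k * exp (q * b)) / p - (1 - k * exp (p * b)) / q = ((p - q) - k * g b) / (- p * q)"
    unfolding g_def using p_pos q_neg by (simp add: field_simps)
  thus ?thesis
    unfolding h_exp_def by simp
qed

lemma h_0_nonneg_iff: "0 \<le> h 0 \<longleftrightarrow> g b \<le> (p - q) / k"
  and h_0_nonpos_iff: "h 0 \<le> 0 \<longleftrightarrow> (p - q) / k \<le> g b"
proof -
  define d where "d = - p * q * (exp (p * b) - exp (q * b))"
  have "0 < - p * q"
    using p_pos q_neg by (simp add: mult_pos_neg)
  hence "0 < d"
    unfolding d_def using denom_pos by (rule mult_pos_pos)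
  moreover have "h 0 = ((p - q) - k * g b) / d"
    unfolding h_def d_def h_exp_0 using b_pos by simp
  moreover have "g b \<le> (p - q) / k \<longleftrightarrow> k * g b \<le> p - q"
    using k_gt_1 by (simp add: le_divide_eq mult.commute)
  moreover have "(p - q) / k \<le> g b \<longleftrightarrow> p - q \<le> k * g b"
    using k_gt_1 by (simp add: divide_le_eq mult.commute)
  ultimately show "0 \<le> h 0 \<longleftrightarrow> g b \<le> (p - q) / k" "h 0 \<le> 0 \<longleftrightarrow> (p - q) / k \<le> g b"
    by (simp_all add: zero_le_divide_iff divide_le_0_iff)
qed

lemma has_real_derivative_h_exp: "(h_exp has_real_derivative h_slope y) (at y)"
proof -
  have "((\<lambda>y. (A / p * exp (p * y) - B / q * exp (q * y)) / D) has_real_derivative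
      (A * exp (p * y) - B * exp (q * y)) / D) (at y)" if "D \<noteq> 0" for A B D
    using p_pos q_neg that by (auto intro!: derivative_eq_intros)
  from this[OF denom_nonzero] show ?thesis
    unfolding h_exp_def h_slope_def .
qed

lemma h_slope_b: "h_slope b = 1"
  unfolding h_slope_def using denom_nonzero by (simp add: algebra_simps)

lemma h_slope_pos:
  assumes "y \<le> b"
  shows "0 < h_slope y"
proof -
  define A where "A = 1 - k * exp (q * b)"
  define B where "B = 1 - k * exp (p * b)"
  have "1 < exp (p * b)"
    using p_pos b_pos by simp
  hence "B < 0"
    unfolding B_def using k_gt_1 less_1_mult by fastforce
  have "0 < A * exp (p * y) - B * exp (q * y)"
  proof (cases "0 \<le> A")
    case True
    hence "0 \<le> A * exp (p * y)"
      by simp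
    moreover have "B * exp (q * y) < 0"
      using \<open>B < 0\<close> by (simp add: mult_neg_pos)
    ultimately show ?thesis
      by linarith
  next
    case False
    have "A * exp (p * b) \<le> A * exp (p * y)"
      using False assms p_pos by (simp add: mult_left_mono_neg)
    moreover have "- B * exp (q * b) \<le> - B * exp (q * y)"
      using \<open>B < 0\<close> assms q_neg by (simp add: mult_left_mono_neg)
    moreover have "A * exp (p * b) - B * exp (q * b) = exp (p * b) - exp (q * b)"
      unfolding A_def B_def by (simp add: algebra_simps)
    ultimately show ?thesis
      using denom_pos by linarith
  qed
  thus ?thesis
    unfolding h_slope_def A_def[symmetric] B_def[symmetric] using denom_pos by simp
qed

lemma has_real_derivative_h: "(h has_real_derivative (if x \<le> b then h_slope x else 1)) (at x)"
proof -
  have "((\<lambda>x. if x \<in> {..b} then h_exp x else x - b + h_exp b) has_vector_derivative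
      (if x \<in> {..b} then h_slope x else 1)) (at x within UNIV)"
  proof (rule has_vector_derivative_If_within_closures[where T = "{b<..}"])
    show "(h_exp has_vector_derivative h_slope x)
        (at x within {..b} \<union> (closure {..b} \<inter> closure {b<..}))"
      using has_real_derivative_h_exp
      by (simp add: has_real_derivative_iff_has_vector_derivative[symmetric]
          has_field_derivative_at_within)
    show "((\<lambda>x. x - b + h_exp b) has_vector_derivative 1)
        (at x within {b<..} \<union> (closure {..b} \<inter> closure {b<..}))"
      unfolding has_real_derivative_iff_has_vector_derivative[symmetric]
      by (auto intro!: derivative_eq_intros)
    show "x \<in> closure {..b} \<Longrightarrow> x \<in> closure {b<..} \<Longrightarrow> h_exp x = x - b + h_exp b"
      "x \<in> closure {..b} \<Longrightarrow> x \<in> closure {b<..} \<Longrightarrow> h_slope x = 1"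
      using h_slope_b by auto
  qed auto
  thus ?thesis
    unfolding has_real_derivative_iff_has_vector_derivative h_def by simp
qed

lemma h_derivative_pos: "\<exists>D. (h has_real_derivative D) (at x) \<and> 0 < D"
  using has_real_derivative_h h_slope_pos by fastforce

end

lemma root_pair_r1_r2:
  assumes "0 < \<mu>" "0 < \<sigma>" "0 < \<alpha>"
  shows "root_pair (r1 \<mu> \<sigma> \<alpha>) (r2 \<mu> \<sigma> \<alpha>)"
proof -
  define m where "m = \<mu> / \<sigma>\<^sup>2"
  define s where "s = sqrt (\<mu>\<^sup>2 / \<sigma>^4 + 2 * \<alpha> / \<sigma>\<^sup>2)"
  have "0 < m"
    unfolding m_def using assms by simp
  have "m\<^sup>2 = \<mu>\<^sup>2 / \<sigma>^4"
    unfolding m_def by (simp add: power_divide flip: power_mult)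
  moreover have "0 < 2 * \<alpha> / \<sigma>\<^sup>2"
    using assms by simp
  ultimately have "m < s"
    unfolding s_def by (intro real_less_rsqrt) simp
  moreover have "r1 \<mu> \<sigma> \<alpha> = s - m" "r2 \<mu> \<sigma> \<alpha> = - m - s"
    unfolding r1_def r2_def m_def s_def by simp_all
  ultimately show ?thesis
    using \<open>0 < m\<close> by unfold_locales linarith+
qed

context
  fixes \<mu> \<sigma> \<alpha> k :: real
  assumes \<mu>_pos: "0 < \<mu>" and \<sigma>_pos: "0 < \<sigma>" and \<alpha>_pos: "0 < \<alpha>" and one_lt_k: "1 < k"
begin

interpretation root_pair "r1 \<mu> \<sigma> \<alpha>" "r2 \<mu> \<sigma> \<alpha>"
  using \<mu>_pos \<sigma>_pos \<alpha>_pos by (rule root_pair_r1_r2)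

lemma G_eq_g: "G \<mu> \<sigma> \<alpha> = g"
  unfolding G_def g_def by (rule refl)

lemma bstar_eq_b_star: "bstar \<mu> \<sigma> \<alpha> = b_star"
  unfolding bstar_def b_star_def by (rule refl)

abbreviation (input) level :: real where
  "level \<equiv> (r1 \<mu> \<sigma> \<alpha> - r2 \<mu> \<sigma> \<alpha>) / k"

lemma Kbound_eq: "Kbound \<mu> \<sigma> \<alpha> = (r1 \<mu> \<sigma> \<alpha> - r2 \<mu> \<sigma> \<alpha>) / g b_star"
proof -
  let ?p = "r1 \<mu> \<sigma> \<alpha>" and ?q = "r2 \<mu> \<sigma> \<alpha>"
  have "?q\<^sup>2 / ?p\<^sup>2 \<noteq> 0"
    using p_pos q_neg by simp
  hence "(?q\<^sup>2 / ?p\<^sup>2) powr (?p / (?p - ?q)) = exp (?p * b_star)"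
    "(?q\<^sup>2 / ?p\<^sup>2) powr (?q / (?p - ?q)) = exp (?q * b_star)"
    unfolding powr_def b_star_def by simp_all
  thus ?thesis
    unfolding Kbound_def g_def Let_def by simp
qed

lemma bss_pos_f_bss:
  "0 < bss \<mu> \<sigma> \<alpha> k \<and> f (bss \<mu> \<sigma> \<alpha> k) = k * (r1 \<mu> \<sigma> \<alpha> - r2 \<mu> \<sigma> \<alpha>)"
  unfolding bss_def f_def[symmetric]
  by (rule theI'[OF ex1_f_eq]) (use one_lt_k diff_pos in simp)

interpretation threshold_crossing "r1 \<mu> \<sigma> \<alpha>" "r2 \<mu> \<sigma> \<alpha>" k "bss \<mu> \<sigma> \<alpha> k"
  using one_lt_k bss_pos_f_bss by unfold_locales auto

lemma barrier_bbar: "barrier (r1 \<mu> \<sigma> \<alpha>) (r2 \<mu> \<sigma> \<alpha>) k (bbar \<mu> \<sigma> \<alpha> k br)"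
  using one_lt_k b0_pos unfolding bbar_def by unfold_locales auto

lemma H_eq_h:
  "H \<mu> \<sigma> \<alpha> k br = barrier.h (r1 \<mu> \<sigma> \<alpha>) (r2 \<mu> \<sigma> \<alpha>) k (bbar \<mu> \<sigma> \<alpha> k br)"
  unfolding H_def barrier.h_def[OF barrier_bbar] barrier.h_exp_def[OF barrier_bbar] Let_def ..

lemma H_derivative_pos: "\<exists>D. (H \<mu> \<sigma> \<alpha> k br has_real_derivative D) (at x) \<and> 0 < D"
  unfolding H_eq_h by (rule barrier.h_derivative_pos[OF barrier_bbar])

lemma H_0_nonneg_iff: "0 \<le> H \<mu> \<sigma> \<alpha> k br 0 \<longleftrightarrow> G \<mu> \<sigma> \<alpha> (bbar \<mu> \<sigma> \<alpha> k br) \<le> level"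
  and H_0_nonpos_iff: "H \<mu> \<sigma> \<alpha> k br 0 \<le> 0 \<longleftrightarrow> level \<le> G \<mu> \<sigma> \<alpha> (bbar \<mu> \<sigma> \<alpha> k br)"
  unfolding H_eq_h G_eq_g
  by (rule barrier.h_0_nonneg_iff[OF barrier_bbar] barrier.h_0_nonpos_iff[OF barrier_bbar])+

lemma condK_iff: "condK \<mu> \<sigma> \<alpha> k \<longleftrightarrow> bss \<mu> \<sigma> \<alpha> k \<le> bstar \<mu> \<sigma> \<alpha>"
  and condK_rev_iff: "condK_rev \<mu> \<sigma> \<alpha> k \<longleftrightarrow> bstar \<mu> \<sigma> \<alpha> \<le> bss \<mu> \<sigma> \<alpha> k"
  unfolding condK_def condK_rev_def Kbound_eq bstar_eq_b_star by (rule k_le_iff k_ge_iff)+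

lemma bss_le_bstar_iff: "bss \<mu> \<sigma> \<alpha> k \<le> bstar \<mu> \<sigma> \<alpha> \<longleftrightarrow> G \<mu> \<sigma> \<alpha> (bss \<mu> \<sigma> \<alpha> k) \<le> level"
  and bstar_le_bss_iff: "bstar \<mu> \<sigma> \<alpha> \<le> bss \<mu> \<sigma> \<alpha> k \<longleftrightarrow> level \<le> G \<mu> \<sigma> \<alpha> (bss \<mu> \<sigma> \<alpha> k)"
  unfolding G_eq_g bstar_eq_b_star by (rule b0_le_b_star_iff b_star_le_b0_iff)+

lemma H_0_nonneg_iff_condK:
    "br \<le> bss \<mu> \<sigma> \<alpha> k \<Longrightarrow> 0 \<le> H \<mu> \<sigma> \<alpha> k br 0 \<longleftrightarrow> condK \<mu> \<sigma> \<alpha> k"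
  and H_0_nonpos_iff_condK_rev:
    "br \<le> bss \<mu> \<sigma> \<alpha> k \<Longrightarrow> H \<mu> \<sigma> \<alpha> k br 0 \<le> 0 \<longleftrightarrow> condK_rev \<mu> \<sigma> \<alpha> k"
  using H_0_nonneg_iff H_0_nonpos_iff condK_iff condK_rev_iff bss_le_bstar_iff bstar_le_bss_iff
  by (simp_all add: bbar_def max_absorb2)

lemma H_0_nonpos_if_condK_rev: "condK_rev \<mu> \<sigma> \<alpha> k \<Longrightarrow> H \<mu> \<sigma> \<alpha> k br 0 \<le> 0"
  unfolding H_0_nonpos_iff condK_rev_iff G_eq_g bstar_eq_b_star bbar_def
  by (rule g_ge_level) simp_all

lemma ex1_G_eq_level:
  "condK \<mu> \<sigma> \<alpha> k \<Longrightarrow> \<exists>!bh. bss \<mu> \<sigma> \<alpha> k \<le> bh \<and> G \<mu> \<sigma> \<alpha> bh = level"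
  unfolding condK_iff G_eq_g bstar_eq_b_star by (rule ex1_solution)

lemma H_0_nonneg_iff_le_solution:
  assumes "condK \<mu> \<sigma> \<alpha> k" "bss \<mu> \<sigma> \<alpha> k \<le> bh" "G \<mu> \<sigma> \<alpha> bh = level"
  shows "0 \<le> H \<mu> \<sigma> \<alpha> k br 0 \<longleftrightarrow> br \<le> bh"
  using assms g_le_level_iff[of bh "bbar \<mu> \<sigma> \<alpha> k br"]
  unfolding H_0_nonneg_iff condK_iff G_eq_g bstar_eq_b_star bbar_def by simp

end

theorem mainTheorem4:
  fixes \<mu> \<sigma> \<alpha> k :: real
  assumes "\<mu> > 0" and "\<sigma> > 0" and "\<alpha> > 0" and "k > 1"
  shows
   "(\<forall>br\<ge>0. \<forall>x\<ge>0. \<exists>D. (H \<mu> \<sigma> \<alpha> k br has_real_derivative D) (at x within {0..}) \<and> D > 0)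
  \<and> (\<forall>br\<ge>0.
       (H \<mu> \<sigma> \<alpha> k br 0 \<ge> 0 \<longleftrightarrow>
          G \<mu> \<sigma> \<alpha> (bbar \<mu> \<sigma> \<alpha> k br) \<le> (r1 \<mu> \<sigma> \<alpha> - r2 \<mu> \<sigma> \<alpha>) / k)
     \<and> (H \<mu> \<sigma> \<alpha> k br 0 \<le> 0 \<longleftrightarrow>
          G \<mu> \<sigma> \<alpha> (bbar \<mu> \<sigma> \<alpha> k br) \<ge> (r1 \<mu> \<sigma> \<alpha> - r2 \<mu> \<sigma> \<alpha>) / k))
  \<and> ((condK \<mu> \<sigma> \<alpha> k \<longleftrightarrow> bss \<mu> \<sigma> \<alpha> k \<le> bstar \<mu> \<sigma> \<alpha>)
     \<and> (bss \<mu> \<sigma> \<alpha> k \<le> bstar \<mu> \<sigma> \<alpha> \<longleftrightarrow>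
          G \<mu> \<sigma> \<alpha> (bss \<mu> \<sigma> \<alpha> k) \<le> (r1 \<mu> \<sigma> \<alpha> - r2 \<mu> \<sigma> \<alpha>) / k)
     \<and> (condK_rev \<mu> \<sigma> \<alpha> k \<longleftrightarrow> bss \<mu> \<sigma> \<alpha> k \<ge> bstar \<mu> \<sigma> \<alpha>)
     \<and> (bss \<mu> \<sigma> \<alpha> k \<ge> bstar \<mu> \<sigma> \<alpha> \<longleftrightarrow>
          G \<mu> \<sigma> \<alpha> (bss \<mu> \<sigma> \<alpha> k) \<ge> (r1 \<mu> \<sigma> \<alpha> - r2 \<mu> \<sigma> \<alpha>) / k))
  \<and> (\<forall>br. 0 \<le> br \<and> br \<le> bss \<mu> \<sigma> \<alpha> k \<longrightarrow>
       (H \<mu> \<sigma> \<alpha> k br 0 \<ge> 0 \<longleftrightarrow> condK \<mu> \<sigma> \<alpha> k)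
     \<and> (H \<mu> \<sigma> \<alpha> k br 0 \<le> 0 \<longleftrightarrow> condK_rev \<mu> \<sigma> \<alpha> k))
  \<and> (condK_rev \<mu> \<sigma> \<alpha> k \<longrightarrow> (\<forall>br\<ge>0. H \<mu> \<sigma> \<alpha> k br 0 \<le> 0))
  \<and> (condK \<mu> \<sigma> \<alpha> k \<longrightarrow>
       (\<exists>!bh. bh \<ge> bss \<mu> \<sigma> \<alpha> k \<and> G \<mu> \<sigma> \<alpha> bh = (r1 \<mu> \<sigma> \<alpha> - r2 \<mu> \<sigma> \<alpha>) / k)
     \<and> (\<forall>bh. bh \<ge> bss \<mu> \<sigma> \<alpha> k \<and> G \<mu> \<sigma> \<alpha> bh = (r1 \<mu> \<sigma> \<alpha> - r2 \<mu> \<sigma> \<alpha>) / k \<longrightarrow>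
          (\<forall>br\<ge>0. H \<mu> \<sigma> \<alpha> k br 0 \<ge> 0 \<longleftrightarrow> br \<le> bh)))"
  apply (intro conjI allI impI)
  subgoal using H_derivative_pos[OF assms] has_field_derivative_at_within by blast
  subgoal by (rule H_0_nonneg_iff[OF assms])
  subgoal by (rule H_0_nonpos_iff[OF assms])
  subgoal by (rule condK_iff[OF assms])
  subgoal by (rule bss_le_bstar_iff[OF assms])
  subgoal by (rule condK_rev_iff[OF assms])
  subgoal by (rule bstar_le_bss_iff[OF assms])
  subgoal by (simp add: H_0_nonneg_iff_condK[OF assms])
  subgoal by (simp add: H_0_nonpos_iff_condK_rev[OF assms])
  subgoal by (rule H_0_nonpos_if_condK_rev[OF assms])
  subgoal by (rule ex1_G_eq_level[OF assms])
  subgoal by (simp add: H_0_nonneg_iff_le_solution[OF assms])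
  done

end
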